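(* Let $p>1$ be an integer, let $d_1,\dots,d_p\in(0,\tfrac12)$, and let $(\varepsilon_t)_{t\in\mathbb{Z}}$ be a zero-mean white noise (pairwise uncorrelated, $E\varepsilon_t=0$) with finite variances $\sigma_t^2$ satisfying $\sigma_{t+p}^2=\sigma_t^2$. Write each $t\in\mathbb{Z}$ uniquely as $t=i+pm$ with $i\in\{1,\dots,p\}$, $m\in\mathbb{Z}$, and define the process $X_{i+pm}=\sum_{j=0}^{\infty}\psi_j^i\varepsilon_{i+pm-j}$ (limit in $L^2$), where $\psi_j^i=\frac{\Gamma(j+d_i)}{\Gamma(j+1)\Gamma(d_i)}$. Let $\pi_j^i=\frac{\Gamma(j-d_i)}{\Gamma(j+1)\Gamma(-d_i)}$. Then for every $i\in\{1,\dots,p\}$ and $m\in\mathbb{Z}$, the series $\sum_{j=0}^{\infty}\pi_j^iX_{i+pm-j}$ converges in quadratic mean.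
   Context: $(X_t)$ is the periodic fractionally integrated process PtvARFIMA$_p(0,d_t,0)$, i.e. the causal solution of $(1-B)^{d_i}X_{i+pm}=\varepsilon_{i+pm}$ with $B$ the backshift operator; the series $\sum_j\pi_j^iX_{i+pm-j}$ is the infinite autoregressive representation $(1-B)^{d_i}X_{i+pm}$. *)

theory Defs
  imports "HOL-Probability.Probability"
begin

(* psi_j^i = Gamma(j+d)/(Gamma(j+1) Gamma(d)),  MA(infinity) coefficients of (1-B)^(-d) *)
definition psi_coef :: "real \<Rightarrow> nat \<Rightarrow> real" where
  "psi_coef d j = Gamma (real j + d) / (Gamma (real j + 1) * Gamma d)"

(* pi_j^i = Gamma(j-d)/(Gamma(j+1) Gamma(-d)),  AR(infinity) coefficients of (1-B)^d *)
definition pi_coef :: "real \<Rightarrow> nat \<Rightarrow> real" where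
  "pi_coef d j = Gamma (real j - d) / (Gamma (real j + 1) * Gamma (- d))"

definition conv_qm :: "'a measure \<Rightarrow> (nat \<Rightarrow> 'a \<Rightarrow> real) \<Rightarrow> bool" where
  "conv_qm M S \<longleftrightarrow> (\<exists>Y. Y \<in> borel_measurable M \<and> integrable M (\<lambda>\<omega>. (Y \<omega>)\<^sup>2) \<and>
      ((\<lambda>n. \<integral>\<omega>. (S n \<omega> - Y \<omega>)\<^sup>2 \<partial>M) \<longlonglongrightarrow> 0))"

end

theory Submission
  imports Defs
begin

(* The AR(infinity) coefficients of (1 - B)^d satisfy pi_0 = 1 and pi_j <= 0 for j >= 1, while
   their partial sums Gamma(n + 1 - d) / (Gamma(n + 1) Gamma(1 - d)) stay positive; hence
   sum_j |pi_j| <= 2.  The second moments of X are uniformly bounded: X_(i+pm) is the L^2 limit of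
   partial sums whose second moments sum_j psi_j^2 sigma_(t-j)^2 do not depend on m, by
   orthogonality of the noise and periodicity of its variance.  Finally, a series with absolutely
   summable coefficients and uniformly L^2-bounded terms converges in L^2: by a weighted
   Cauchy-Schwarz inequality its tails are dominated by (sum_j |c_j|) (sum_j |c_j| x_j^2), which
   is integrable, and dominated convergence applies. *)

section \<open>The autoregressive coefficients\<close>

lemma Gamma_minus_eq:
  fixes d :: real
  assumes "0 < d" "d < 1"
  shows "Gamma (- d) = - Gamma (1 - d) / d"
proof -
  have "- d \<notin> \<int>\<^sub>\<le>\<^sub>0"
  proof
    assume "- d \<in> \<int>\<^sub>\<le>\<^sub>0"
    then obtain n :: int where "- d = of_int n"
      by (auto elim: nonpos_Ints_cases)
    with assms have "-1 < n" "n < 0"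
      by linarith+
    then show False
      by linarith
  qed
  then have "Gamma (1 - d) = - d * Gamma (- d)"
    using Gamma_plus1[of "- d"] by simp
  with assms show ?thesis
    by (simp add: field_simps)
qed

lemma Gamma_minus_neg:
  fixes d :: real
  assumes "0 < d" "d < 1"
  shows "Gamma (- d) < 0"
  using assms by (simp add: Gamma_minus_eq divide_neg_pos)

lemma pi_coef_0:
  assumes "0 < d" "d < 1"
  shows "pi_coef d 0 = 1"
  using Gamma_minus_neg[OF assms] by (simp add: pi_coef_def)

lemma pi_coef_nonpos:
  assumes "0 < d" "d < 1" "0 < j"
  shows "pi_coef d j \<le> 0"
  unfolding pi_coef_def using assms Gamma_minus_neg[OF assms(1,2)]
  by (intro divide_nonneg_neg less_imp_le mult_pos_neg) auto

lemma sum_pi_coef: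
  fixes d :: real
  assumes "0 < d" "d < 1"
  shows "(\<Sum>j\<le>n. pi_coef d j) = Gamma (real n + 1 - d) / (Gamma (real n + 1) * Gamma (1 - d))"
proof (induction n)
  case 0
  have "Gamma (1 - d) \<noteq> 0"
    using Gamma_real_pos[of "1 - d"] assms by linarith
  then show ?case
    by (simp add: pi_coef_0[OF assms])
next
  case (Suc n)
  have Gamma_succ: "Gamma (x + 1) = x * Gamma x" if "x > 0" for x :: real
    using that by (intro Gamma_plus1) (auto dest: nonpos_Ints_nonpos)
  have pos: "Gamma (real n + 1) > 0" "Gamma (real n + 1 - d) > 0" "Gamma (1 - d) > 0"
    "real n + 1 > 0"
    using assms by (auto intro!: Gamma_real_pos)
  have Gamma_Suc: "Gamma (real (Suc n) + 1) = (real n + 1) * Gamma (real n + 1)"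
    "Gamma (real (Suc n) + 1 - d) = (real n + 1 - d) * Gamma (real n + 1 - d)"
    using Gamma_succ[of "real n + 1"] Gamma_succ[of "real n + 1 - d"] assms
    by (simp_all add: algebra_simps)
  let ?Q = "Gamma (real n + 1 - d) / (Gamma (real n + 1) * Gamma (1 - d))"
  have "(\<Sum>j\<le>Suc n. pi_coef d j) = ?Q + pi_coef d (Suc n)"
    using Suc by simp
  also have "pi_coef d (Suc n) = - d / (real n + 1) * ?Q"
    using Gamma_Suc pos assms by (simp add: pi_coef_def Gamma_minus_eq field_simps)
  also have "q + - d / (real n + 1) * q = (real n + 1 - d) / (real n + 1) * q" for q
    using pos(4) by (simp add: field_simps)
  also have "(real n + 1 - d) / (real n + 1) * ?Q
      = Gamma (real (Suc n) + 1 - d) / (Gamma (real (Suc n) + 1) * Gamma (1 - d))"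
    unfolding Gamma_Suc by (simp add: mult.assoc)
  finally show ?case .
qed

lemma summable_abs_pi_coef:
  fixes d :: real
  assumes "0 < d" "d < 1"
  shows "summable (\<lambda>j. \<bar>pi_coef d j\<bar>)"
proof (rule summableI_nonneg_bounded)
  fix n
  have "\<bar>pi_coef d j\<bar> = 2 * of_bool (j = 0) - pi_coef d j" for j
    using pi_coef_0[OF assms] pi_coef_nonpos[OF assms, of j] by auto
  then have "(\<Sum>j\<le>n. \<bar>pi_coef d j\<bar>) = 2 - (\<Sum>j\<le>n. pi_coef d j)"
    by (simp add: sum_subtractf sum.distrib)
  moreover have "0 < (\<Sum>j\<le>n. pi_coef d j)"
    unfolding sum_pi_coef[OF assms] using assms by (simp add: Gamma_real_pos)
  moreover have "(\<Sum>j<n. \<bar>pi_coef d j\<bar>) \<le> (\<Sum>j\<le>n. \<bar>pi_coef d j\<bar>)"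
    by (intro sum_mono2) auto
  ultimately show "(\<Sum>j<n. \<bar>pi_coef d j\<bar>) \<le> 2"
    by linarith
qed simp

section \<open>Mean-square convergence of absolutely summable series\<close>

lemma sum_square_le_weighted:
  fixes c y :: "'i \<Rightarrow> real"
  shows "(\<Sum>i\<in>I. c i * y i)\<^sup>2 \<le> (\<Sum>i\<in>I. \<bar>c i\<bar>) * (\<Sum>i\<in>I. \<bar>c i\<bar> * (y i)\<^sup>2)"
proof -
  have "\<bar>\<Sum>i\<in>I. c i * y i\<bar> \<le> (\<Sum>i\<in>I. \<bar>c i\<bar> * \<bar>y i\<bar>)"
    using sum_abs[of "\<lambda>i. c i * y i" I] by (simp add: abs_mult)
  also have "\<dots> = \<bar>\<Sum>i\<in>I. sqrt \<bar>c i\<bar> * (sqrt \<bar>c i\<bar> * \<bar>y i\<bar>)\<bar>"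
    by (simp add: sum_nonneg flip: mult.assoc)
  finally have "(\<Sum>i\<in>I. c i * y i)\<^sup>2 \<le> (\<Sum>i\<in>I. sqrt \<bar>c i\<bar> * (sqrt \<bar>c i\<bar> * \<bar>y i\<bar>))\<^sup>2"
    unfolding abs_le_square_iff .
  also have "\<dots> \<le> (\<Sum>i\<in>I. (sqrt \<bar>c i\<bar>)\<^sup>2) * (\<Sum>i\<in>I. (sqrt \<bar>c i\<bar> * \<bar>y i\<bar>)\<^sup>2)"
    by (rule Cauchy_Schwarz_ineq_sum)
  also have "\<dots> = (\<Sum>i\<in>I. \<bar>c i\<bar>) * (\<Sum>i\<in>I. \<bar>c i\<bar> * (y i)\<^sup>2)"
    by (simp add: power_mult_distrib)
  finally show ?thesis .
qed

lemma summable_mult_of_weighted_square: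
  fixes c y :: "nat \<Rightarrow> real"
  assumes "summable (\<lambda>j. \<bar>c j\<bar>)" "summable (\<lambda>j. \<bar>c j\<bar> * (y j)\<^sup>2)"
  shows "summable (\<lambda>j. c j * y j)"
proof (rule summable_comparison_test')
  show "summable (\<lambda>j. \<bar>c j\<bar> + \<bar>c j\<bar> * (y j)\<^sup>2)"
    using assms by (rule summable_add)
  fix j
  have "\<bar>y j\<bar> \<le> 1 + (y j)\<^sup>2"
    using sum_squares_bound[of "\<bar>y j\<bar>" 1] by simp
  then have "\<bar>c j\<bar> * \<bar>y j\<bar> \<le> \<bar>c j\<bar> * (1 + (y j)\<^sup>2)"
    by (rule mult_left_mono) simp
  then show "norm (c j * y j) \<le> \<bar>c j\<bar> + \<bar>c j\<bar> * (y j)\<^sup>2"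
    by (simp add: abs_mult distrib_left)
qed

lemma suminf_tail_square_le:
  fixes c y :: "nat \<Rightarrow> real"
  assumes c: "summable (\<lambda>j. \<bar>c j\<bar>)" and cy: "summable (\<lambda>j. \<bar>c j\<bar> * (y j)\<^sup>2)"
  shows "((\<Sum>j. c j * y j) - (\<Sum>j<n. c j * y j))\<^sup>2 \<le> (\<Sum>j. \<bar>c j\<bar>) * (\<Sum>j. \<bar>c j\<bar> * (y j)\<^sup>2)"
proof (rule LIMSEQ_le_const2)
  have "(\<lambda>N. (\<Sum>j<N. c j * y j) - (\<Sum>j<n. c j * y j)) \<longlonglongrightarrow> (\<Sum>j. c j * y j) - (\<Sum>j<n. c j * y j)"
    using summable_LIMSEQ[OF summable_mult_of_weighted_square[OF c cy]] by (rule tendsto_diff) simp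
  moreover have "\<forall>\<^sub>F N in sequentially. (\<Sum>j<N. c j * y j) - (\<Sum>j<n. c j * y j) = (\<Sum>j\<in>{n..<N}. c j * y j)"
    unfolding eventually_sequentially lessThan_atLeast0
    by (intro exI[of _ n] allI impI sum_diff_nat_ivl) simp_all
  ultimately have "(\<lambda>N. \<Sum>j\<in>{n..<N}. c j * y j) \<longlonglongrightarrow> (\<Sum>j. c j * y j) - (\<Sum>j<n. c j * y j)"
    by (rule Lim_transform_eventually)
  then show "(\<lambda>N. (\<Sum>j\<in>{n..<N}. c j * y j)\<^sup>2) \<longlonglongrightarrow> ((\<Sum>j. c j * y j) - (\<Sum>j<n. c j * y j))\<^sup>2"
    by (rule tendsto_power)
  show "\<exists>N0. \<forall>N\<ge>N0. (\<Sum>j\<in>{n..<N}. c j * y j)\<^sup>2 \<le> (\<Sum>j. \<bar>c j\<bar>) * (\<Sum>j. \<bar>c j\<bar> * (y j)\<^sup>2)"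
  proof (intro exI allI impI)
    fix N
    have "(\<Sum>j\<in>{n..<N}. c j * y j)\<^sup>2 \<le> (\<Sum>j\<in>{n..<N}. \<bar>c j\<bar>) * (\<Sum>j\<in>{n..<N}. \<bar>c j\<bar> * (y j)\<^sup>2)"
      by (rule sum_square_le_weighted)
    also have "\<dots> \<le> (\<Sum>j. \<bar>c j\<bar>) * (\<Sum>j. \<bar>c j\<bar> * (y j)\<^sup>2)"
      using c cy by (intro mult_mono sum_le_suminf sum_nonneg suminf_nonneg) auto
    finally show "(\<Sum>j\<in>{n..<N}. c j * y j)\<^sup>2 \<le> (\<Sum>j. \<bar>c j\<bar>) * (\<Sum>j. \<bar>c j\<bar> * (y j)\<^sup>2)" .
  qed
qed

lemma integrable_mult_of_square_integrable:
  fixes f g :: "'a \<Rightarrow> real"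
  assumes [measurable]: "f \<in> borel_measurable M" "g \<in> borel_measurable M"
    and "integrable M (\<lambda>x. (f x)\<^sup>2)" "integrable M (\<lambda>x. (g x)\<^sup>2)"
  shows "integrable M (\<lambda>x. f x * g x)"
proof (rule Bochner_Integration.integrable_bound)
  show "integrable M (\<lambda>x. (f x)\<^sup>2 + (g x)\<^sup>2)"
    using assms by simp
  have "\<bar>a * b\<bar> \<le> a\<^sup>2 + b\<^sup>2" for a b :: real
  proof -
    have "2 * (\<bar>a\<bar> * \<bar>b\<bar>) \<le> a\<^sup>2 + b\<^sup>2"
      using sum_squares_bound[of "\<bar>a\<bar>" "\<bar>b\<bar>"] by (simp add: mult.assoc)
    moreover have "0 \<le> \<bar>a\<bar> * \<bar>b\<bar>"
      by simp
    ultimately show ?thesis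
      unfolding abs_mult by linarith
  qed
  then show "AE x in M. norm (f x * g x) \<le> norm ((f x)\<^sup>2 + (g x)\<^sup>2)"
    by simp
qed simp

lemma square_integrable_diff:
  fixes f g :: "'a \<Rightarrow> real"
  assumes [measurable]: "f \<in> borel_measurable M" "g \<in> borel_measurable M"
    and "integrable M (\<lambda>x. (f x)\<^sup>2)" "integrable M (\<lambda>x. (g x)\<^sup>2)"
  shows "integrable M (\<lambda>x. (f x - g x)\<^sup>2)"
  using assms integrable_mult_of_square_integrable[of f M g] by (simp add: power2_diff mult.assoc)

lemma square_integrable_sum:
  fixes f :: "'i \<Rightarrow> 'a \<Rightarrow> real"
  assumes [measurable]: "\<And>j. j \<in> A \<Longrightarrow> f j \<in> borel_measurable M"
    and "\<And>j. j \<in> A \<Longrightarrow> integrable M (\<lambda>x. (f j x)\<^sup>2)"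
  shows "integrable M (\<lambda>x. (\<Sum>j\<in>A. f j x)\<^sup>2)"
proof -
  have sq: "(\<lambda>x. (\<Sum>j\<in>A. f j x)\<^sup>2) = (\<lambda>x. \<Sum>j\<in>A. \<Sum>k\<in>A. f j x * f k x)"
    by (simp add: power2_eq_square sum_product)
  show ?thesis
    unfolding sq using assms
    by (intro Bochner_Integration.integrable_sum integrable_mult_of_square_integrable) auto
qed

lemma integral_square_le_twice:
  fixes f g :: "'a \<Rightarrow> real"
  assumes [measurable]: "f \<in> borel_measurable M" "g \<in> borel_measurable M"
    and "integrable M (\<lambda>x. (f x)\<^sup>2)" "integrable M (\<lambda>x. (g x)\<^sup>2)"
  shows "(\<integral>x. (f x)\<^sup>2 \<partial>M) \<le> 2 * (\<integral>x. (f x - g x)\<^sup>2 \<partial>M) + 2 * (\<integral>x. (g x)\<^sup>2 \<partial>M)"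
proof -
  have "(a::real)\<^sup>2 \<le> 2 * (a - b)\<^sup>2 + 2 * b\<^sup>2" for a b
    using zero_le_power2[of "a - 2 * b"] by (simp add: power2_eq_square algebra_simps)
  then have "(\<integral>x. (f x)\<^sup>2 \<partial>M) \<le> (\<integral>x. 2 * (f x - g x)\<^sup>2 + 2 * (g x)\<^sup>2 \<partial>M)"
    using assms square_integrable_diff[of f M g] by (intro integral_mono) auto
  then show ?thesis
    using assms square_integrable_diff[of f M g] by simp
qed

lemma AE_summable_of_summable_integral:
  fixes f :: "nat \<Rightarrow> 'a \<Rightarrow> real"
  assumes int: "\<And>j. integrable M (f j)" and nonneg: "\<And>j \<omega>. 0 \<le> f j \<omega>"
    and summable: "summable (\<lambda>j. \<integral>\<omega>. f j \<omega> \<partial>M)"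
  shows "AE \<omega> in M. summable (\<lambda>j. f j \<omega>)"
proof -
  have [measurable]: "f j \<in> borel_measurable M" for j
    using int by (rule borel_measurable_integrable)
  have "(\<integral>\<^sup>+\<omega>. (\<Sum>j. ennreal (f j \<omega>)) \<partial>M) = (\<Sum>j. \<integral>\<^sup>+\<omega>. ennreal (f j \<omega>) \<partial>M)"
    by (rule nn_integral_suminf) measurable
  also have "\<dots> = (\<Sum>j. ennreal (\<integral>\<omega>. f j \<omega> \<partial>M))"
    using int nonneg by (simp add: nn_integral_eq_integral)
  also have "\<dots> \<noteq> \<infinity>"
    using summable nonneg by (simp add: ennreal_suminf_neq_top integral_nonneg)
  finally have "AE \<omega> in M. (\<Sum>j. ennreal (f j \<omega>)) \<noteq> \<infinity>"
    by (intro nn_integral_PInf_AE) measurable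
  then show ?thesis
    by eventually_elim (auto intro: summable_suminf_not_top nonneg)
qed

lemma conv_qm_abs_summable_series:
  fixes x :: "nat \<Rightarrow> 'a \<Rightarrow> real" and c :: "nat \<Rightarrow> real"
  assumes [measurable]: "\<And>j. x j \<in> borel_measurable M"
    and L2: "\<And>j. integrable M (\<lambda>\<omega>. (x j \<omega>)\<^sup>2)"
    and bounded: "\<And>j. (\<integral>\<omega>. (x j \<omega>)\<^sup>2 \<partial>M) \<le> B"
    and c: "summable (\<lambda>j. \<bar>c j\<bar>)"
  shows "conv_qm M (\<lambda>n \<omega>. \<Sum>j<n. c j * x j \<omega>)"
proof -
  define a where "a j \<omega> = \<bar>c j\<bar> * (x j \<omega>)\<^sup>2" for j \<omega>
  define Y where "Y \<omega> = (\<Sum>j. c j * x j \<omega>)" for \<omega>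
  define W where "W \<omega> = (\<Sum>j. \<bar>c j\<bar>) * (\<Sum>j. a j \<omega>)" for \<omega>
  have a_int: "integrable M (a j)" for j
    unfolding a_def using L2 by simp
  have a_nonneg: "0 \<le> a j \<omega>" for j \<omega>
    unfolding a_def by simp
  have a_integral_summable: "summable (\<lambda>j. \<integral>\<omega>. a j \<omega> \<partial>M)"
  proof (rule summable_comparison_test')
    show "summable (\<lambda>j. \<bar>c j\<bar> * B)"
      using c by (rule summable_mult2)
    show "norm (\<integral>\<omega>. a j \<omega> \<partial>M) \<le> \<bar>c j\<bar> * B" for j
      unfolding a_def using bounded[of j] by (simp add: integral_nonneg mult_left_mono)
  qed
  with a_int a_nonneg have a_summable: "AE \<omega> in M. summable (\<lambda>j. a j \<omega>)"
    by (intro AE_summable_of_summable_integral)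
  have "integrable M (\<lambda>\<omega>. \<Sum>j. a j \<omega>)"
    using a_int a_summable a_integral_summable a_nonneg
    by (intro integrable_suminf) auto
  then have W_int: "integrable M W"
    unfolding W_def by simp
  have dominated: "AE \<omega> in M. \<forall>n. (Y \<omega> - (\<Sum>j<n. c j * x j \<omega>))\<^sup>2 \<le> W \<omega>"
    using a_summable unfolding Y_def W_def a_def
    by eventually_elim (auto intro: suminf_tail_square_le c)
  have converges: "AE \<omega> in M. (\<lambda>n. \<Sum>j<n. c j * x j \<omega>) \<longlonglongrightarrow> Y \<omega>"
    using a_summable unfolding Y_def a_def
    by eventually_elim (intro summable_LIMSEQ summable_mult_of_weighted_square[OF c])
  have Y_meas [measurable]: "Y \<in> borel_measurable M" and [measurable]: "W \<in> borel_measurable M"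
    unfolding Y_def W_def a_def by measurable
  have "integrable M (\<lambda>\<omega>. (Y \<omega>)\<^sup>2)"
  proof (rule Bochner_Integration.integrable_bound[OF W_int])
    show "AE \<omega> in M. norm ((Y \<omega>)\<^sup>2) \<le> norm (W \<omega>)"
      using dominated by eventually_elim (drule spec[of _ 0], simp)
  qed simp
  moreover have "(\<lambda>n. \<integral>\<omega>. ((\<Sum>j<n. c j * x j \<omega>) - Y \<omega>)\<^sup>2 \<partial>M) \<longlonglongrightarrow> (\<integral>\<omega>. 0 \<partial>M)"
  proof (rule integral_dominated_convergence)
    show "AE \<omega> in M. (\<lambda>n. ((\<Sum>j<n. c j * x j \<omega>) - Y \<omega>)\<^sup>2) \<longlonglongrightarrow> 0"
      using converges by eventually_elim (auto intro!: tendsto_eq_intros simp: LIM_zero_iff)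
    show "AE \<omega> in M. norm (((\<Sum>j<n. c j * x j \<omega>) - Y \<omega>)\<^sup>2) \<le> W \<omega>" for n
      using dominated by eventually_elim (simp add: power2_commute)
  qed (use W_int in auto)
  ultimately show ?thesis
    unfolding conv_qm_def using Y_meas by (intro exI[of _ Y] conjI) auto
qed

section \<open>Second moments of periodic moving averages\<close>

lemma integral_square_sum_uncorrelated:
  fixes x :: "'i \<Rightarrow> 'a \<Rightarrow> real"
  assumes "finite A"
    and [measurable]: "\<And>j. j \<in> A \<Longrightarrow> x j \<in> borel_measurable M"
    and L2: "\<And>j. j \<in> A \<Longrightarrow> integrable M (\<lambda>\<omega>. (x j \<omega>)\<^sup>2)"
    and uncorr: "\<And>j k. j \<in> A \<Longrightarrow> k \<in> A \<Longrightarrow> j \<noteq> k \<Longrightarrow> (\<integral>\<omega>. x j \<omega> * x k \<omega> \<partial>M) = 0"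
  shows "(\<integral>\<omega>. (\<Sum>j\<in>A. c j * x j \<omega>)\<^sup>2 \<partial>M) = (\<Sum>j\<in>A. (c j)\<^sup>2 * (\<integral>\<omega>. (x j \<omega>)\<^sup>2 \<partial>M))"
proof -
  have prod: "integrable M (\<lambda>\<omega>. c j * c k * (x j \<omega> * x k \<omega>))" if "j \<in> A" "k \<in> A" for j k
    using that L2 by (intro integrable_mult_right integrable_mult_of_square_integrable) auto
  have "(\<integral>\<omega>. (\<Sum>j\<in>A. c j * x j \<omega>)\<^sup>2 \<partial>M)
      = (\<integral>\<omega>. (\<Sum>j\<in>A. \<Sum>k\<in>A. c j * c k * (x j \<omega> * x k \<omega>)) \<partial>M)"
    unfolding power2_eq_square sum_product by (simp add: mult_ac)
  also have "\<dots> = (\<Sum>j\<in>A. \<Sum>k\<in>A. c j * c k * (\<integral>\<omega>. x j \<omega> * x k \<omega> \<partial>M))"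
    using prod by (simp add: integrable_sum)
  also have "\<dots> = (\<Sum>j\<in>A. \<Sum>k\<in>A. if k = j then (c j)\<^sup>2 * (\<integral>\<omega>. (x j \<omega>)\<^sup>2 \<partial>M) else 0)"
    using uncorr by (intro sum.cong refl) (auto simp: power2_eq_square)
  finally show ?thesis
    using \<open>finite A\<close> by simp
qed

lemma periodic_int_shift:
  fixes f :: "int \<Rightarrow> 'b"
  assumes periodic: "\<And>t. f (t + p) = f t"
  shows "f (t + p * m) = f t"
proof (induction m arbitrary: t rule: int_induct[where k = 0])
  case (step1 m)
  then show ?case
    using periodic[of "t + p * m"] by (simp add: algebra_simps)
next
  case (step2 m)
  then show ?case
    using periodic[of "t + p * (m - 1)"] by (simp add: algebra_simps)
qed simp

lemma integral_square_moving_average_shift: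
  fixes eps :: "int \<Rightarrow> 'a \<Rightarrow> real" and c :: "nat \<Rightarrow> real" and p :: int
  assumes [measurable]: "\<And>t. eps t \<in> borel_measurable M"
    and L2: "\<And>t. integrable M (\<lambda>\<omega>. (eps t \<omega>)\<^sup>2)"
    and uncorr: "\<And>s t. s \<noteq> t \<Longrightarrow> (\<integral>\<omega>. eps s \<omega> * eps t \<omega> \<partial>M) = 0"
    and periodic: "\<And>t. (\<integral>\<omega>. (eps (t + p) \<omega>)\<^sup>2 \<partial>M) = (\<integral>\<omega>. (eps t \<omega>)\<^sup>2 \<partial>M)"
  shows "(\<integral>\<omega>. (\<Sum>j<n. c j * eps (t + p * m - int j) \<omega>)\<^sup>2 \<partial>M)
    = (\<integral>\<omega>. (\<Sum>j<n. c j * eps (t - int j) \<omega>)\<^sup>2 \<partial>M)"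
proof -
  have second_moment: "(\<integral>\<omega>. (\<Sum>j<n. c j * eps (s - int j) \<omega>)\<^sup>2 \<partial>M)
      = (\<Sum>j<n. (c j)\<^sup>2 * (\<integral>\<omega>. (eps (s - int j) \<omega>)\<^sup>2 \<partial>M))" for s
    using uncorr L2 by (intro integral_square_sum_uncorrelated[where x = "\<lambda>j. eps (s - int j)"]) auto
  have "(\<integral>\<omega>. (eps (t + p * m - int j) \<omega>)\<^sup>2 \<partial>M) = (\<integral>\<omega>. (eps (t - int j) \<omega>)\<^sup>2 \<partial>M)" for j
    using periodic_int_shift[where f = "\<lambda>t. \<integral>\<omega>. (eps t \<omega>)\<^sup>2 \<partial>M", OF periodic, of "t - int j" m]
    by (simp add: algebra_simps)
  then show ?thesis
    unfolding second_moment by simp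
qed

lemma integral_square_le_of_L2_limits:
  fixes X Y :: "'a \<Rightarrow> real" and S T :: "nat \<Rightarrow> 'a \<Rightarrow> real"
  assumes [measurable]: "X \<in> borel_measurable M" "Y \<in> borel_measurable M"
      "\<And>n. S n \<in> borel_measurable M" "\<And>n. T n \<in> borel_measurable M"
    and L2: "integrable M (\<lambda>\<omega>. (X \<omega>)\<^sup>2)" "integrable M (\<lambda>\<omega>. (Y \<omega>)\<^sup>2)"
      "\<And>n. integrable M (\<lambda>\<omega>. (S n \<omega>)\<^sup>2)" "\<And>n. integrable M (\<lambda>\<omega>. (T n \<omega>)\<^sup>2)"
    and X_lim: "(\<lambda>n. \<integral>\<omega>. (X \<omega> - S n \<omega>)\<^sup>2 \<partial>M) \<longlonglongrightarrow> 0"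
    and Y_lim: "(\<lambda>n. \<integral>\<omega>. (Y \<omega> - T n \<omega>)\<^sup>2 \<partial>M) \<longlonglongrightarrow> 0"
    and ST: "\<And>n. (\<integral>\<omega>. (S n \<omega>)\<^sup>2 \<partial>M) = (\<integral>\<omega>. (T n \<omega>)\<^sup>2 \<partial>M)"
  shows "(\<integral>\<omega>. (X \<omega>)\<^sup>2 \<partial>M) \<le> 4 * (\<integral>\<omega>. (Y \<omega>)\<^sup>2 \<partial>M)"
proof (rule field_le_epsilon)
  fix e :: real assume "0 < e"
  then have "\<forall>\<^sub>F n in sequentially. (\<integral>\<omega>. (X \<omega> - S n \<omega>)\<^sup>2 \<partial>M) < e / 6
      \<and> (\<integral>\<omega>. (Y \<omega> - T n \<omega>)\<^sup>2 \<partial>M) < e / 6"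
    using X_lim Y_lim by (auto intro!: eventually_conj order_tendstoD(2))
  then obtain n where X_close: "(\<integral>\<omega>. (X \<omega> - S n \<omega>)\<^sup>2 \<partial>M) < e / 6"
    and Y_close: "(\<integral>\<omega>. (T n \<omega> - Y \<omega>)\<^sup>2 \<partial>M) < e / 6"
    by (auto simp: eventually_sequentially power2_commute)
  have "(\<integral>\<omega>. (X \<omega>)\<^sup>2 \<partial>M) \<le> 2 * (\<integral>\<omega>. (X \<omega> - S n \<omega>)\<^sup>2 \<partial>M) + 2 * (\<integral>\<omega>. (S n \<omega>)\<^sup>2 \<partial>M)"
    "(\<integral>\<omega>. (T n \<omega>)\<^sup>2 \<partial>M) \<le> 2 * (\<integral>\<omega>. (T n \<omega> - Y \<omega>)\<^sup>2 \<partial>M) + 2 * (\<integral>\<omega>. (Y \<omega>)\<^sup>2 \<partial>M)"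
    using L2 by (auto intro!: integral_square_le_twice)
  with X_close Y_close ST[of n] show "(\<integral>\<omega>. (X \<omega>)\<^sup>2 \<partial>M) \<le> 4 * (\<integral>\<omega>. (Y \<omega>)\<^sup>2 \<partial>M) + e"
    by linarith
qed

lemma int_eq_residue_plus_multiple:
  fixes p :: nat and t :: int
  assumes "0 < p"
  obtains i m where "i \<in> {1..p}" "t = int i + int p * m"
proof
  have "0 \<le> (t - 1) mod int p" "(t - 1) mod int p < int p"
    using assms by simp_all
  then show "nat ((t - 1) mod int p) + 1 \<in> {1..p}"
    by auto
  show "t = int (nat ((t - 1) mod int p) + 1) + int p * ((t - 1) div int p)"
    using \<open>0 \<le> (t - 1) mod int p\<close> by (simp add: algebra_simps)
qed

lemma second_moments_bounded_of_periodic_moving_average: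
  fixes eps X :: "int \<Rightarrow> 'a \<Rightarrow> real" and psi :: "nat \<Rightarrow> nat \<Rightarrow> real" and p :: nat
  assumes "0 < p"
    and eps_meas [measurable]: "\<And>t. eps t \<in> borel_measurable M"
    and eps_L2: "\<And>t. integrable M (\<lambda>\<omega>. (eps t \<omega>)\<^sup>2)"
    and eps_uncorr: "\<And>s t. s \<noteq> t \<Longrightarrow> (\<integral>\<omega>. eps s \<omega> * eps t \<omega> \<partial>M) = 0"
    and eps_periodic: "\<And>t. (\<integral>\<omega>. (eps (t + int p) \<omega>)\<^sup>2 \<partial>M) = (\<integral>\<omega>. (eps t \<omega>)\<^sup>2 \<partial>M)"
    and X_meas [measurable]: "\<And>t. X t \<in> borel_measurable M"
    and X_L2: "\<And>t. integrable M (\<lambda>\<omega>. (X t \<omega>)\<^sup>2)"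
    and X_lim: "\<And>i m. i \<in> {1..p} \<Longrightarrow>
       (\<lambda>n. \<integral>\<omega>. (X (int i + int p * m) \<omega>
            - (\<Sum>j<n. psi i j * eps (int i + int p * m - int j) \<omega>))\<^sup>2 \<partial>M) \<longlonglongrightarrow> 0"
  shows "\<exists>B. \<forall>t. (\<integral>\<omega>. (X t \<omega>)\<^sup>2 \<partial>M) \<le> B"
proof (intro exI allI)
  define MA where "MA i t n \<omega> = (\<Sum>j<n. psi i j * eps (t - int j) \<omega>)" for i t n \<omega>
  have MA_meas [measurable]: "MA i t n \<in> borel_measurable M" for i t n
    unfolding MA_def by measurable
  have MA_L2: "integrable M (\<lambda>\<omega>. (MA i t n \<omega>)\<^sup>2)" for i t n
    unfolding MA_def using eps_L2 by (intro square_integrable_sum) (auto simp: power_mult_distrib)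
  have shift_bound: "(\<integral>\<omega>. (X (int i + int p * m) \<omega>)\<^sup>2 \<partial>M) \<le> 4 * (\<integral>\<omega>. (X (int i) \<omega>)\<^sup>2 \<partial>M)"
    if i: "i \<in> {1..p}" for i m
  proof (rule integral_square_le_of_L2_limits[where S = "MA i (int i + int p * m)" and T = "MA i (int i)"])
    show "(\<lambda>n. \<integral>\<omega>. (X (int i + int p * m) \<omega> - MA i (int i + int p * m) n \<omega>)\<^sup>2 \<partial>M) \<longlonglongrightarrow> 0"
      using X_lim[OF i, of m] unfolding MA_def .
    show "(\<lambda>n. \<integral>\<omega>. (X (int i) \<omega> - MA i (int i) n \<omega>)\<^sup>2 \<partial>M) \<longlonglongrightarrow> 0"
      using X_lim[OF i, of 0] unfolding MA_def by simp
    show "(\<integral>\<omega>. (MA i (int i + int p * m) n \<omega>)\<^sup>2 \<partial>M) = (\<integral>\<omega>. (MA i (int i) n \<omega>)\<^sup>2 \<partial>M)" for n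
      unfolding MA_def
      by (rule integral_square_moving_average_shift[where eps = eps and M = M,
            OF eps_meas eps_L2 eps_uncorr eps_periodic])
  qed (simp_all add: X_L2 MA_L2)
  fix t
  obtain i m where i: "i \<in> {1..p}" and t: "t = int i + int p * m"
    using \<open>0 < p\<close> by (rule int_eq_residue_plus_multiple)
  have "(\<integral>\<omega>. (X t \<omega>)\<^sup>2 \<partial>M) \<le> 4 * (\<integral>\<omega>. (X (int i) \<omega>)\<^sup>2 \<partial>M)"
    unfolding t using i by (rule shift_bound)
  also have "\<dots> \<le> (\<Sum>k\<in>{1..p}. 4 * (\<integral>\<omega>. (X (int k) \<omega>)\<^sup>2 \<partial>M))"
    using i by (intro member_le_sum integral_nonneg) auto
  finally show "(\<integral>\<omega>. (X t \<omega>)\<^sup>2 \<partial>M) \<le> (\<Sum>k\<in>{1..p}. 4 * (\<integral>\<omega>. (X (int k) \<omega>)\<^sup>2 \<partial>M))" .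
qed

theorem proposition2:
  fixes M :: "'a measure" and p :: nat and d :: "nat \<Rightarrow> real"
    and eps :: "int \<Rightarrow> 'a \<Rightarrow> real" and X :: "int \<Rightarrow> 'a \<Rightarrow> real"
  assumes "prob_space M"
    and "p > 1"
    and d_range: "\<And>i. i \<in> {1..p} \<Longrightarrow> 0 < d i \<and> d i < 1/2"
    and eps_meas: "\<And>t. eps t \<in> borel_measurable M"
    and eps_L2: "\<And>t. integrable M (\<lambda>\<omega>. (eps t \<omega>)\<^sup>2)"
    and eps_mean: "\<And>t. integrable M (eps t) \<and> (\<integral>\<omega>. eps t \<omega> \<partial>M) = 0"
    and eps_uncorr: "\<And>s t. s \<noteq> t \<Longrightarrow> (\<integral>\<omega>. eps s \<omega> * eps t \<omega> \<partial>M) = 0"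
    and eps_periodic: "\<And>t. (\<integral>\<omega>. (eps (t + int p) \<omega>)\<^sup>2 \<partial>M) = (\<integral>\<omega>. (eps t \<omega>)\<^sup>2 \<partial>M)"
    and X_meas: "\<And>t. X t \<in> borel_measurable M"
    and X_L2: "\<And>t. integrable M (\<lambda>\<omega>. (X t \<omega>)\<^sup>2)"
    and X_def: "\<And>i m. i \<in> {1..p} \<Longrightarrow>
       (\<lambda>n. \<integral>\<omega>. (X (int i + int p * m) \<omega>
            - (\<Sum>j<n. psi_coef (d i) j * eps (int i + int p * m - int j) \<omega>))\<^sup>2 \<partial>M)
       \<longlonglongrightarrow> 0"
  shows "\<forall>i\<in>{1..p}. \<forall>m::int.
           conv_qm M (\<lambda>n \<omega>. \<Sum>j<n. pi_coef (d i) j * X (int i + int p * m - int j) \<omega>)"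
proof (intro ballI allI)
  from \<open>p > 1\<close> have "0 < p"
    by simp
  then have "\<exists>B. \<forall>t. (\<integral>\<omega>. (X t \<omega>)\<^sup>2 \<partial>M) \<le> B"
    by (rule second_moments_bounded_of_periodic_moving_average[where M = M and eps = eps and X = X
          and psi = "\<lambda>i. psi_coef (d i)", OF _ eps_meas eps_L2 eps_uncorr eps_periodic X_meas X_L2 X_def])
  then obtain B where X_bounded: "\<And>t. (\<integral>\<omega>. (X t \<omega>)\<^sup>2 \<partial>M) \<le> B"
    by blast
  fix i m assume "i \<in> {1..p}"
  then have "0 < d i" "d i < 1"
    using d_range by force+
  then have "summable (\<lambda>j. \<bar>pi_coef (d i) j\<bar>)"
    by (rule summable_abs_pi_coef)
  then show "conv_qm M (\<lambda>n \<omega>. \<Sum>j<n. pi_coef (d i) j * X (int i + int p * m - int j) \<omega>)"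
    using X_meas X_L2 X_bounded by (intro conv_qm_abs_summable_series) auto
qed

end
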